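(* Let $G$ be a discrete group acting by homeomorphisms $\alpha$ on a locally compact Hausdorff space $X$, and let $\sigma$ be the induced action on $A=C_0(X)$, $\sigma_g(f)=f\circ\alpha_g^{-1}$. The following are equivalent: (i) $\sigma$ is $G$-separating, i.e. for all $a,b\in A_+$, $c\in A$, $\varepsilon>0$ there exist $d_1,d_2\in A$ and $g_1,g_2\in G$ with $\|d_1^*ad_1-\sigma_{g_1}(a)\|<\varepsilon$, $\|d_2^*bd_2-\sigma_{g_2}(b)\|<\varepsilon$ and $\|d_1^*cd_2\|<\varepsilon$; (ii) for all open $U_1,U_2\subseteq X$ and compact $K_1,K_2\subseteq X$ with $K_1\subseteq U_1$, $K_2\subseteq U_2$, there exist $g_1,g_2\in G$ with $\alpha_{g_1}(K_1)\subseteq U_1$, $\alpha_{g_2}(K_2)\subseteq U_2$ and $\alpha_{g_1}(K_1)\cap\alpha_{g_2}(K_2)=\emptyset$. *)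

theory Defs
  imports "HOL-Analysis.Analysis" "HOL-Algebra.Group"
begin

definition C0 :: "'a topology \<Rightarrow> ('a \<Rightarrow> complex) set" where
  "C0 X = {f. continuous_map X euclidean f \<and>
              (\<forall>e>0. \<exists>K. compactin X K \<and> (\<forall>x\<in>topspace X - K. norm (f x) < e))}"

definition C0_pos :: "'a topology \<Rightarrow> ('a \<Rightarrow> complex) set" where
  "C0_pos X = {f \<in> C0 X. \<forall>x\<in>topspace X. Im (f x) = 0 \<and> Re (f x) \<ge> 0}"

definition sup_norm :: "'a topology \<Rightarrow> ('a \<Rightarrow> complex) \<Rightarrow> real" where
  "sup_norm X f = (if topspace X = {} then 0 else (SUP x\<in>topspace X. norm (f x)))"

definition homeo_action :: "('g, 'b) monoid_scheme \<Rightarrow> 'a topology \<Rightarrow> ('g \<Rightarrow> 'a \<Rightarrow> 'a) \<Rightarrow> bool" where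
  "homeo_action G X \<alpha> \<longleftrightarrow>
     (\<forall>g\<in>carrier G. homeomorphic_map X X (\<alpha> g)) \<and>
     (\<forall>x\<in>topspace X. \<alpha> \<one>\<^bsub>G\<^esub> x = x) \<and>
     (\<forall>g\<in>carrier G. \<forall>h\<in>carrier G. \<forall>x\<in>topspace X. \<alpha> (g \<otimes>\<^bsub>G\<^esub> h) x = \<alpha> g (\<alpha> h x))"

definition induced_action :: "('g, 'b) monoid_scheme \<Rightarrow> ('g \<Rightarrow> 'a \<Rightarrow> 'a) \<Rightarrow> 'g \<Rightarrow> ('a \<Rightarrow> complex) \<Rightarrow> ('a \<Rightarrow> complex)" where
  "induced_action G \<alpha> g f = (\<lambda>x. f (\<alpha> (inv\<^bsub>G\<^esub> g) x))"

text \<open>G-separating action sigma on A = C_0(X) (pointwise operations; d^* = complex conjugate).\<close>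
definition G_separating :: "('g, 'b) monoid_scheme \<Rightarrow> 'a topology \<Rightarrow> ('g \<Rightarrow> ('a \<Rightarrow> complex) \<Rightarrow> ('a \<Rightarrow> complex)) \<Rightarrow> bool" where
  "G_separating G X \<sigma> \<longleftrightarrow>
     (\<forall>a\<in>C0_pos X. \<forall>b\<in>C0_pos X. \<forall>c\<in>C0 X. \<forall>e>0.
        \<exists>d1\<in>C0 X. \<exists>d2\<in>C0 X. \<exists>g1\<in>carrier G. \<exists>g2\<in>carrier G.
          sup_norm X (\<lambda>x. cnj (d1 x) * a x * d1 x - \<sigma> g1 a x) < e \<and>
          sup_norm X (\<lambda>x. cnj (d2 x) * b x * d2 x - \<sigma> g2 b x) < e \<and>
          sup_norm X (\<lambda>x. cnj (d1 x) * c x * d2 x) < e)"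

end

theory Submission
  imports Defs
begin

text \<open>
  (ii) \<Longrightarrow> (i): given \<open>a, b, c\<close> and \<open>t = \<epsilon>/2\<close>, the superlevel sets \<open>{a \<ge> t}\<close>, \<open>{b \<ge> t}\<close> are
  compact and lie inside the open sets \<open>{a > t/2}\<close>, \<open>{b > t/2}\<close>; (ii) moves them into these open
  sets with disjoint images. Over \<open>\<alpha>\<^sub>g{a \<ge> t}\<close> the function \<open>a\<close> is at least \<open>t/2\<close>, so
  \<open>d = (max (\<sigma>\<^sub>g a - t) 0 / max a (t/2))\<^sup>1\<^sup>/\<^sup>2\<close> satisfies \<open>|d\<^sup>* a d - \<sigma>\<^sub>g a| \<le> t\<close> and is supported
  in \<open>\<alpha>\<^sub>g{a \<ge> t}\<close>; the disjoint supports make \<open>d\<^sub>1\<^sup>* c d\<^sub>2 = 0\<close>.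

  (i) \<Longrightarrow> (ii): take Urysohn functions \<open>f\<^sub>i\<close> that are \<open>1\<close> on \<open>K\<^sub>i\<close> and vanish off \<open>U\<^sub>i\<close>, and apply (i)
  to \<open>a = f\<^sub>1\<close>, \<open>b = f\<^sub>2\<close>, \<open>c = (f\<^sub>1f\<^sub>2)\<^sup>1\<^sup>/\<^sup>2\<close> with \<open>\<epsilon> = 1/2\<close>. Since \<open>\<sigma>\<^sub>g\<^sub>i f\<^sub>i = 1\<close> on \<open>\<alpha>\<^sub>g\<^sub>i K\<^sub>i\<close>, there
  \<open>|d\<^sub>i|\<^sup>2 f\<^sub>i > 1/2\<close>; hence \<open>f\<^sub>i \<noteq> 0\<close>, i.e. \<open>\<alpha>\<^sub>g\<^sub>i K\<^sub>i \<subseteq> U\<^sub>i\<close>, and at a common point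
  \<open>|d\<^sub>1\<^sup>* c d\<^sub>2| = (|d\<^sub>1|\<^sup>2f\<^sub>1 |d\<^sub>2|\<^sup>2f\<^sub>2)\<^sup>1\<^sup>/\<^sup>2 > 1/2\<close>, contradicting the third estimate.
\<close>

definition separates_compacts ::
    "('g, 'b) monoid_scheme \<Rightarrow> 'a topology \<Rightarrow> ('g \<Rightarrow> 'a \<Rightarrow> 'a) \<Rightarrow> bool" where
  "separates_compacts G X \<alpha> \<longleftrightarrow>
    (\<forall>U1 U2 K1 K2. openin X U1 \<and> openin X U2 \<and> compactin X K1 \<and> compactin X K2 \<and>
        K1 \<subseteq> U1 \<and> K2 \<subseteq> U2 \<longrightarrow>
       (\<exists>g1\<in>carrier G. \<exists>g2\<in>carrier G. \<alpha> g1 ` K1 \<subseteq> U1 \<and> \<alpha> g2 ` K2 \<subseteq> U2 \<and>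
          \<alpha> g1 ` K1 \<inter> \<alpha> g2 ` K2 = {}))"

lemma continuous_map_Re:
  "continuous_map X euclidean f \<Longrightarrow> continuous_map X euclideanreal (\<lambda>x. Re (f x))"
  by (simp add: continuous_map_atin tendsto_Re)

lemma continuous_map_of_real:
  "continuous_map X euclideanreal f \<Longrightarrow> continuous_map X euclidean (\<lambda>x. complex_of_real (f x))"
  by (simp add: continuous_map_atin tendsto_of_real)

lemma bounded_mult_comp:
  fixes f g :: "'a \<Rightarrow> 'b::real_normed_algebra"
  assumes "bounded (f ` S)" "bounded (g ` S)"
  shows "bounded ((\<lambda>x. f x * g x) ` S)"
proof -
  obtain B C where "\<And>x. x \<in> S \<Longrightarrow> norm (f x) \<le> B" "\<And>x. x \<in> S \<Longrightarrow> norm (g x) \<le> C"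
    using assms by (auto simp: bounded_iff)
  then have "\<And>x. x \<in> S \<Longrightarrow> norm (f x * g x) \<le> B * C"
    by (meson norm_mult_ineq mult_mono norm_ge_zero order_trans)
  then show ?thesis
    by (auto simp: bounded_iff)
qed

lemma bounded_cnj_comp: "bounded (f ` S) \<Longrightarrow> bounded ((\<lambda>x. cnj (f x)) ` S)"
  by (simp add: bounded_iff)

lemma C0_imp_bounded:
  assumes "f \<in> C0 X"
  shows "bounded (f ` topspace X)"
proof -
  have f: "continuous_map X euclidean f"
    "\<And>e. e > 0 \<Longrightarrow> \<exists>K. compactin X K \<and> (\<forall>x\<in>topspace X - K. norm (f x) < e)"
    using assms unfolding C0_def by auto
  obtain K where K: "compactin X K" "\<And>x. x \<in> topspace X - K \<Longrightarrow> norm (f x) < 1"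
    using f(2)[of 1] by auto
  have "compactin euclidean (f ` K)"
    by (rule image_compactin[OF K(1) f(1)])
  then have "bounded (f ` K)"
    by (simp add: compact_imp_bounded)
  then obtain B where B: "\<And>x. x \<in> K \<Longrightarrow> norm (f x) \<le> B"
    by (auto simp: bounded_iff)
  have "norm (f x) \<le> max B 1" if "x \<in> topspace X" for x
    using B[of x] K(2)[of x] that by (cases "x \<in> K") auto
  then show ?thesis
    by (auto simp: bounded_iff)
qed

lemma C0_pos_eq_of_real:
  assumes "a \<in> C0_pos X" "x \<in> topspace X"
  shows "a x = complex_of_real (Re (a x))" "0 \<le> Re (a x)"
  using assms unfolding C0_pos_def by (auto simp: complex_eq_iff)

lemma of_real_compact_support_in_C0:
  assumes "continuous_map X euclideanreal f" "compactin X L"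
    and "\<And>x. x \<in> topspace X \<Longrightarrow> x \<notin> L \<Longrightarrow> f x = 0"
  shows "(\<lambda>x. complex_of_real (f x)) \<in> C0 X"
  using assms continuous_map_of_real unfolding C0_def by fastforce

lemma compactin_superlevel_C0:
  assumes "a \<in> C0 X" "0 < t"
  shows "compactin X {x \<in> topspace X. t \<le> Re (a x)}"
proof -
  obtain K where K: "compactin X K" "\<And>x. x \<in> topspace X - K \<Longrightarrow> norm (a x) < t"
    using assms unfolding C0_def by blast
  have sub: "{x \<in> topspace X. t \<le> Re (a x)} \<subseteq> K"
  proof
    fix x assume "x \<in> {x \<in> topspace X. t \<le> Re (a x)}"
    then show "x \<in> K"
      using K(2)[of x] complex_Re_le_cmod[of "a x"] by fastforce
  qed
  have "continuous_map X euclideanreal (\<lambda>x. Re (a x))"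
    using assms continuous_map_Re unfolding C0_def by blast
  then have "closedin X {x \<in> topspace X. Re (a x) \<in> {t..}}"
    by (rule closedin_continuous_map_preimage) simp
  then have "closedin X {x \<in> topspace X. t \<le> Re (a x)}"
    by simp
  then show ?thesis
    using closed_compactin K(1) sub by blast
qed

lemma openin_superlevel_C0:
  assumes "a \<in> C0 X"
  shows "openin X {x \<in> topspace X. s < Re (a x)}"
proof -
  have "continuous_map X euclideanreal (\<lambda>x. Re (a x))"
    using assms continuous_map_Re unfolding C0_def by blast
  then have "openin X {x \<in> topspace X. Re (a x) \<in> {s<..}}"
    by (rule openin_continuous_map_preimage) simp
  then show ?thesis
    by simp
qed

lemma norm_le_sup_norm:
  assumes "bounded (h ` topspace X)" "x \<in> topspace X"
  shows "norm (h x) \<le> sup_norm X h"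
proof -
  have "bdd_above ((\<lambda>x. norm (h x)) ` topspace X)"
    using assms(1) by (auto simp: bounded_iff bdd_above_def)
  then show ?thesis
    using assms(2) cSUP_upper unfolding sup_norm_def by fastforce
qed

lemma sup_norm_le:
  assumes "\<And>x. x \<in> topspace X \<Longrightarrow> norm (h x) \<le> t" "0 \<le> t"
  shows "sup_norm X h \<le> t"
  using assms by (auto simp: sup_norm_def intro!: cSUP_least)

context
  fixes G :: "('g, 'b) monoid_scheme" and X :: "'a topology" and \<alpha> :: "'g \<Rightarrow> 'a \<Rightarrow> 'a"
  assumes group: "group G" and action: "homeo_action G X \<alpha>"
begin

lemma continuous_map_action:
  "g \<in> carrier G \<Longrightarrow> continuous_map X X (\<alpha> g)"
  using action homeomorphic_imp_continuous_map unfolding homeo_action_def by blast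

lemma action_in_topspace:
  "g \<in> carrier G \<Longrightarrow> x \<in> topspace X \<Longrightarrow> \<alpha> g x \<in> topspace X"
  using continuous_map_action continuous_map_image_subset_topspace by blast

lemma action_mult_inv:
  assumes "g \<in> carrier G" "x \<in> topspace X"
  shows "\<alpha> g (\<alpha> (inv\<^bsub>G\<^esub> g) x) = x" "\<alpha> (inv\<^bsub>G\<^esub> g) (\<alpha> g x) = x"
  using action assms group.inv_closed[OF group] group.r_inv[OF group] group.l_inv[OF group]
  unfolding homeo_action_def by (metis (no_types))+

lemma induced_action_apply:
  "g \<in> carrier G \<Longrightarrow> x \<in> topspace X \<Longrightarrow> induced_action G \<alpha> g f (\<alpha> g x) = f x"
  by (simp add: induced_action_def action_mult_inv)

lemma Collect_induced_action_eq_image: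
  assumes g: "g \<in> carrier G"
  shows "{x \<in> topspace X. P (induced_action G \<alpha> g f x)} = \<alpha> g ` {y \<in> topspace X. P (f y)}"
proof -
  have gi: "inv\<^bsub>G\<^esub> g \<in> carrier G"
    using group g by simp
  show ?thesis
  proof (intro equalityI subsetI)
    fix x assume x: "x \<in> {x \<in> topspace X. P (induced_action G \<alpha> g f x)}"
    then have "\<alpha> (inv\<^bsub>G\<^esub> g) x \<in> {y \<in> topspace X. P (f y)}"
      using action_in_topspace[OF gi] by (simp add: induced_action_def)
    then show "x \<in> \<alpha> g ` {y \<in> topspace X. P (f y)}"
      using x action_mult_inv(1)[OF g] by (metis (no_types, lifting) image_eqI mem_Collect_eq)
  qed (auto simp: action_in_topspace g induced_action_apply)
qed

lemma induced_action_bounded: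
  assumes "g \<in> carrier G" "bounded (f ` topspace X)"
  shows "bounded (induced_action G \<alpha> g f ` topspace X)"
proof (rule bounded_subset[OF assms(2)])
  show "induced_action G \<alpha> g f ` topspace X \<subseteq> f ` topspace X"
    using assms(1) group action_in_topspace by (auto simp: induced_action_def)
qed

lemma induced_action_C0_pos:
  assumes g: "g \<in> carrier G" and a: "a \<in> C0_pos X"
  shows "induced_action G \<alpha> g a \<in> C0_pos X"
proof -
  have gi: "inv\<^bsub>G\<^esub> g \<in> carrier G"
    using group g by simp
  have cont: "continuous_map X euclidean (a \<circ> \<alpha> (inv\<^bsub>G\<^esub> g))"
    using a continuous_map_compose[OF continuous_map_action[OF gi]] unfolding C0_pos_def C0_def by blast
  have "\<exists>K'. compactin X K' \<and> (\<forall>x\<in>topspace X - K'. norm (induced_action G \<alpha> g a x) < e)"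
    if "e > 0" for e
  proof -
    obtain K where K: "compactin X K" "\<And>x. x \<in> topspace X - K \<Longrightarrow> norm (a x) < e"
      using a \<open>e > 0\<close> unfolding C0_pos_def C0_def by blast
    have "norm (induced_action G \<alpha> g a x) < e" if "x \<in> topspace X - \<alpha> g ` K" for x
      using that K(2) action_in_topspace[OF gi] action_mult_inv(1)[OF g]
      by (simp add: induced_action_def) (metis image_eqI)
    then show ?thesis
      using image_compactin[OF K(1) continuous_map_action[OF g]] by blast
  qed
  then show ?thesis
    using a cont action_in_topspace[OF gi]
    by (simp add: C0_pos_def C0_def induced_action_def o_def)
qed

end

section \<open>From separated compact sets to a separating action\<close>

lemma compression_estimate:
  fixes r s t :: real
  assumes "0 \<le> r" "0 \<le> s" "0 < t" "t < s \<Longrightarrow> t/2 < r"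
  shows "\<bar>max (s - t) 0 / max r (t/2) * r - s\<bar> \<le> t"
  using assms by (cases "t < s") (auto simp: max_def)

lemma C0_pos_compression:
  assumes a: "a \<in> C0_pos X" and b: "b \<in> C0_pos X" and t: "0 < t"
    and large: "\<And>x. x \<in> topspace X \<Longrightarrow> t \<le> Re (b x) \<Longrightarrow> t/2 < Re (a x)"
  obtains d where "d \<in> C0 X"
    "\<And>x. x \<in> topspace X \<Longrightarrow> norm (cnj (d x) * a x * d x - b x) \<le> t"
    "\<And>x. x \<in> topspace X \<Longrightarrow> d x \<noteq> 0 \<Longrightarrow> t \<le> Re (b x)"
proof
  define q where "q x = max (Re (b x) - t) 0 / max (Re (a x)) (t/2)" for x
  define d where "d x = complex_of_real (sqrt (q x))" for x
  have q0: "q x = 0" if "Re (b x) < t" for x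
    using that by (simp add: q_def)
  have "continuous_map X euclideanreal (\<lambda>x. sqrt (q x))"
    unfolding q_def using a b t
    by (intro continuous_intros continuous_map_Re) (auto simp: C0_pos_def C0_def)
  moreover have "compactin X {x \<in> topspace X. t \<le> Re (b x)}"
    using b t compactin_superlevel_C0 unfolding C0_pos_def by blast
  ultimately show "d \<in> C0 X"
    unfolding d_def by (rule of_real_compact_support_in_C0) (simp add: q0)
  show "norm (cnj (d x) * a x * d x - b x) \<le> t" if x: "x \<in> topspace X" for x
  proof -
    have "q x \<ge> 0"
      using t by (simp add: q_def)
    then have "cnj (d x) * complex_of_real r * d x - complex_of_real s
        = complex_of_real (q x * r - s)" for r s
      by (simp add: d_def algebra_simps flip: of_real_mult)
    then have "cnj (d x) * a x * d x - b x = complex_of_real (q x * Re (a x) - Re (b x))"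
      using C0_pos_eq_of_real(1)[OF a x] C0_pos_eq_of_real(1)[OF b x] by metis
    then have "norm (cnj (d x) * a x * d x - b x) = \<bar>q x * Re (a x) - Re (b x)\<bar>"
      by (simp only: norm_of_real)
    also have "\<dots> \<le> t"
      unfolding q_def using compression_estimate C0_pos_eq_of_real(2)[OF _ x] a b t large[OF x]
      by fastforce
    finally show ?thesis .
  qed
  show "t \<le> Re (b x)" if "x \<in> topspace X" "d x \<noteq> 0" for x
    using that q0 by (force simp: d_def)
qed

lemma translate_compression:
  assumes G: "group G" and act: "homeo_action G X \<alpha>" and g: "g \<in> carrier G"
    and a: "a \<in> C0_pos X" and t: "0 < t"
    and moved: "\<alpha> g ` {x \<in> topspace X. t \<le> Re (a x)} \<subseteq> {x \<in> topspace X. t/2 < Re (a x)}"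
  obtains d where "d \<in> C0 X"
    "\<And>x. x \<in> topspace X \<Longrightarrow> norm (cnj (d x) * a x * d x - induced_action G \<alpha> g a x) \<le> t"
    "\<And>x. x \<in> topspace X \<Longrightarrow> d x \<noteq> 0 \<Longrightarrow> x \<in> \<alpha> g ` {x \<in> topspace X. t \<le> Re (a x)}"
proof -
  have level: "{x \<in> topspace X. t \<le> Re (induced_action G \<alpha> g a x)}
      = \<alpha> g ` {x \<in> topspace X. t \<le> Re (a x)}"
    by (rule Collect_induced_action_eq_image[OF G act g])
  show ?thesis
  proof (rule C0_pos_compression[OF a induced_action_C0_pos[OF G act g a] t])
    show "t/2 < Re (a x)" if "x \<in> topspace X" "t \<le> Re (induced_action G \<alpha> g a x)" for x
      using that moved level by blast
  qed (use that level in blast)+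
qed

lemma separates_compacts_imp_G_separating:
  assumes G: "group G" and act: "homeo_action G X \<alpha>" and sep: "separates_compacts G X \<alpha>"
  shows "G_separating G X (induced_action G \<alpha>)"
  unfolding G_separating_def
proof (intro ballI allI impI)
  fix a b c and e :: real
  assume a: "a \<in> C0_pos X" and b: "b \<in> C0_pos X" and c: "c \<in> C0 X" and e: "e > 0"
  define t where "t = e/2"
  have t: "0 < t" "t < e"
    using e by (auto simp: t_def)
  define K1 U1 K2 U2 where
    "K1 = {x \<in> topspace X. t \<le> Re (a x)}" "U1 = {x \<in> topspace X. t/2 < Re (a x)}"
    "K2 = {x \<in> topspace X. t \<le> Re (b x)}" "U2 = {x \<in> topspace X. t/2 < Re (b x)}"
  have "a \<in> C0 X" "b \<in> C0 X"
    using a b by (auto simp: C0_pos_def)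
  then have "openin X U1" "openin X U2" "compactin X K1" "compactin X K2"
    unfolding K1_U1_K2_U2_def using t(1) by (blast intro: openin_superlevel_C0 compactin_superlevel_C0)+
  moreover have "K1 \<subseteq> U1" "K2 \<subseteq> U2"
    unfolding K1_U1_K2_U2_def using t(1) by auto
  ultimately obtain g1 g2 where g: "g1 \<in> carrier G" "g2 \<in> carrier G"
    "\<alpha> g1 ` K1 \<subseteq> U1" "\<alpha> g2 ` K2 \<subseteq> U2" "\<alpha> g1 ` K1 \<inter> \<alpha> g2 ` K2 = {}"
    using sep unfolding separates_compacts_def by meson
  obtain d1 where d1: "d1 \<in> C0 X"
    "\<And>x. x \<in> topspace X \<Longrightarrow> norm (cnj (d1 x) * a x * d1 x - induced_action G \<alpha> g1 a x) \<le> t"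
    "\<And>x. x \<in> topspace X \<Longrightarrow> d1 x \<noteq> 0 \<Longrightarrow> x \<in> \<alpha> g1 ` K1"
    using translate_compression[OF G act g(1) a t(1)] g(3) unfolding K1_U1_K2_U2_def by blast
  obtain d2 where d2: "d2 \<in> C0 X"
    "\<And>x. x \<in> topspace X \<Longrightarrow> norm (cnj (d2 x) * b x * d2 x - induced_action G \<alpha> g2 b x) \<le> t"
    "\<And>x. x \<in> topspace X \<Longrightarrow> d2 x \<noteq> 0 \<Longrightarrow> x \<in> \<alpha> g2 ` K2"
    using translate_compression[OF G act g(2) b t(1)] g(4) unfolding K1_U1_K2_U2_def by blast
  have "cnj (d1 x) * c x * d2 x = 0" if "x \<in> topspace X" for x
    using d1(3)[OF that] d2(3)[OF that] g(5) by fastforce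
  then have "sup_norm X (\<lambda>x. cnj (d1 x) * c x * d2 x) \<le> 0"
    by (intro sup_norm_le) auto
  moreover have "sup_norm X (\<lambda>x. cnj (d1 x) * a x * d1 x - induced_action G \<alpha> g1 a x) \<le> t"
    "sup_norm X (\<lambda>x. cnj (d2 x) * b x * d2 x - induced_action G \<alpha> g2 b x) \<le> t"
    using d1(2) d2(2) t by (auto intro: sup_norm_le)
  ultimately show "\<exists>d1\<in>C0 X. \<exists>d2\<in>C0 X. \<exists>g1\<in>carrier G. \<exists>g2\<in>carrier G.
      sup_norm X (\<lambda>x. cnj (d1 x) * a x * d1 x - induced_action G \<alpha> g1 a x) < e \<and>
      sup_norm X (\<lambda>x. cnj (d2 x) * b x * d2 x - induced_action G \<alpha> g2 b x) < e \<and>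
      sup_norm X (\<lambda>x. cnj (d1 x) * c x * d2 x) < e"
    using d1(1) d2(1) g(1,2) t e by (meson le_less_trans)
qed

section \<open>From a separating action to separated compact sets\<close>

lemma Urysohn_compact_support:
  assumes "Hausdorff_space X" "locally_compact_space X"
    and "openin X U" "compactin X K" "K \<subseteq> U"
  obtains f L where "continuous_map X euclideanreal f" "\<And>x. x \<in> topspace X \<Longrightarrow> 0 \<le> f x"
    "\<And>x. x \<in> K \<Longrightarrow> f x = 1" "\<And>x. x \<in> topspace X \<Longrightarrow> x \<notin> U \<Longrightarrow> f x = 0"
    "compactin X L" "\<And>x. x \<in> topspace X \<Longrightarrow> x \<notin> L \<Longrightarrow> f x = 0"
proof -
  obtain V L where VL: "openin X V" "compactin X L" "K \<subseteq> V" "V \<subseteq> L"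
    using locally_compact_space_compact_closed_compact[of X] assms(1,2,4) by blast
  define T where "T = topspace X - (U \<inter> V)"
  have "completely_regular_space X"
    using assms(1,2) locally_compact_regular_imp_completely_regular_space by blast
  moreover have "closedin X T"
    unfolding T_def using assms(3) VL(1) by (intro closedin_diff closedin_topspace openin_Int)
  moreover have "disjnt K T"
    unfolding T_def disjnt_def using assms(5) VL(3) by blast
  ultimately obtain f where f: "continuous_map X (top_of_set {0..1::real}) f"
    "f ` T \<subseteq> {0}" "f ` K \<subseteq> {1}"
    using assms(4) Urysohn_completely_regular_compact_closed[of 0 1 X K T] by auto
  then have "continuous_map X euclideanreal f" "f ` topspace X \<subseteq> {0..1}"
    by (auto simp: continuous_map_in_subtopology)
  moreover have "f x = 0" if "x \<in> topspace X" "x \<notin> U \<inter> V" for x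
    using f(2) that unfolding T_def by blast
  ultimately show ?thesis
  proof (intro that[of f L])
    show "0 \<le> f x" if "x \<in> topspace X" for x
      using \<open>f ` topspace X \<subseteq> {0..1}\<close> that by auto
    show "f x = 1" if "x \<in> K" for x
      using f(3) that by auto
  qed (use VL in auto)
qed

lemma cnj_mult_of_real_mult: "cnj z * complex_of_real r * z = complex_of_real ((cmod z)\<^sup>2 * r)"
proof -
  have "cnj z * complex_of_real r * z = complex_of_real r * (z * cnj z)"
    by (simp add: algebra_simps)
  then show ?thesis
    by (simp add: mult.commute flip: complex_norm_square)
qed

lemma half_lt_mult_sqrt_mult:
  fixes u v p q :: real
  assumes "0 \<le> u" "0 \<le> v" "1/2 < u\<^sup>2 * p" "1/2 < v\<^sup>2 * q"
  shows "1/2 < u * sqrt (p * q) * v"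
proof -
  have "(1/2) * (1/2) < (u\<^sup>2 * p) * (v\<^sup>2 * q)"
    using assms(3,4) by (intro mult_strict_mono) auto
  then have "sqrt ((1/2) * (1/2)) < sqrt ((u\<^sup>2 * p) * (v\<^sup>2 * q))"
    by (rule real_sqrt_less_mono)
  also have "\<dots> = u * sqrt (p * q) * v"
    using assms(1,2) by (simp add: real_sqrt_mult)
  finally show ?thesis
    by (simp add: real_sqrt_divide)
qed

lemma compression_large_on_translate:
  assumes G: "group G" and act: "homeo_action G X \<alpha>" and g: "g \<in> carrier G"
    and a: "a \<in> C0_pos X" and d: "d \<in> C0 X"
    and K: "K \<subseteq> topspace X" and one: "\<And>k. k \<in> K \<Longrightarrow> a k = 1"
    and close: "sup_norm X (\<lambda>x. cnj (d x) * a x * d x - induced_action G \<alpha> g a x) < 1/2"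
    and x: "x \<in> \<alpha> g ` K"
  shows "1/2 < (cmod (d x))\<^sup>2 * Re (a x)"
proof -
  obtain k where k: "k \<in> K" "x = \<alpha> g k"
    using x by blast
  have xt: "x \<in> topspace X"
    using k K action_in_topspace[OF G act g] by blast
  have "bounded ((\<lambda>x. cnj (d x) * a x * d x - induced_action G \<alpha> g a x) ` topspace X)"
    using a d C0_imp_bounded unfolding C0_pos_def
    by (intro bounded_minus_comp bounded_mult_comp bounded_cnj_comp
        induced_action_bounded[OF G act g]) auto
  then have "norm (cnj (d x) * a x * d x - induced_action G \<alpha> g a x) < 1/2"
    using norm_le_sup_norm xt close by fastforce
  moreover have "cnj (d x) * a x * d x - induced_action G \<alpha> g a x
      = complex_of_real ((cmod (d x))\<^sup>2 * Re (a x) - 1)"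
    using induced_action_apply[OF G act g] k K one cnj_mult_of_real_mult
      C0_pos_eq_of_real(1)[OF a xt] by (metis of_real_1 of_real_diff subsetD)
  ultimately have "\<bar>(cmod (d x))\<^sup>2 * Re (a x) - 1\<bar> < 1/2"
    by (metis norm_of_real)
  then show ?thesis
    by linarith
qed

lemma G_separating_imp_separates_compacts:
  assumes G: "group G" and H: "Hausdorff_space X" and lc: "locally_compact_space X"
    and act: "homeo_action G X \<alpha>" and sep: "G_separating G X (induced_action G \<alpha>)"
  shows "separates_compacts G X \<alpha>"
  unfolding separates_compacts_def
proof (intro allI impI, elim conjE)
  fix U1 U2 K1 K2
  assume U: "openin X U1" "openin X U2" and K: "compactin X K1" "compactin X K2"
    and KU: "K1 \<subseteq> U1" "K2 \<subseteq> U2"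
  obtain f1 L1 where f1: "continuous_map X euclideanreal f1" "\<And>x. x \<in> topspace X \<Longrightarrow> 0 \<le> f1 x"
    "\<And>x. x \<in> K1 \<Longrightarrow> f1 x = 1" "\<And>x. x \<in> topspace X \<Longrightarrow> x \<notin> U1 \<Longrightarrow> f1 x = 0"
    "compactin X L1" "\<And>x. x \<in> topspace X \<Longrightarrow> x \<notin> L1 \<Longrightarrow> f1 x = 0"
    using Urysohn_compact_support[OF H lc U(1) K(1) KU(1)] by blast
  obtain f2 L2 where f2: "continuous_map X euclideanreal f2" "\<And>x. x \<in> topspace X \<Longrightarrow> 0 \<le> f2 x"
    "\<And>x. x \<in> K2 \<Longrightarrow> f2 x = 1" "\<And>x. x \<in> topspace X \<Longrightarrow> x \<notin> U2 \<Longrightarrow> f2 x = 0"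
    "compactin X L2" "\<And>x. x \<in> topspace X \<Longrightarrow> x \<notin> L2 \<Longrightarrow> f2 x = 0"
    using Urysohn_compact_support[OF H lc U(2) K(2) KU(2)] by blast
  define a b c where "a x = complex_of_real (f1 x)" "b x = complex_of_real (f2 x)"
    "c x = complex_of_real (sqrt (f1 x * f2 x))" for x
  have "a \<in> C0 X" "b \<in> C0 X"
    unfolding a_b_c_def using f1(1,5,6) f2(1,5,6) by (blast intro: of_real_compact_support_in_C0)+
  moreover have "c \<in> C0 X"
    unfolding a_b_c_def
    by (rule of_real_compact_support_in_C0[OF _ f1(5)]) (simp_all add: f1 f2 continuous_intros)
  ultimately have C0: "a \<in> C0_pos X" "b \<in> C0_pos X" "c \<in> C0 X"
    using f1(2) f2(2) by (auto simp: C0_pos_def a_b_c_def)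
  obtain d1 d2 g1 g2 where d: "d1 \<in> C0 X" "d2 \<in> C0 X" and g: "g1 \<in> carrier G" "g2 \<in> carrier G"
    and close: "sup_norm X (\<lambda>x. cnj (d1 x) * a x * d1 x - induced_action G \<alpha> g1 a x) < 1/2"
      "sup_norm X (\<lambda>x. cnj (d2 x) * b x * d2 x - induced_action G \<alpha> g2 b x) < 1/2"
      "sup_norm X (\<lambda>x. cnj (d1 x) * c x * d2 x) < 1/2"
    using sep[unfolded G_separating_def, rule_format, OF C0, of "1/2"] by auto
  have large1: "1/2 < (cmod (d1 x))\<^sup>2 * f1 x" if "x \<in> \<alpha> g1 ` K1" for x
    using compression_large_on_translate[OF G act g(1) C0(1) d(1) compactin_subset_topspace[OF K(1)]
        _ close(1) that] f1(3) by (simp add: a_b_c_def)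
  have large2: "1/2 < (cmod (d2 x))\<^sup>2 * f2 x" if "x \<in> \<alpha> g2 ` K2" for x
    using compression_large_on_translate[OF G act g(2) C0(2) d(2) compactin_subset_topspace[OF K(2)]
        _ close(2) that] f2(3) by (simp add: a_b_c_def)
  have top: "\<alpha> g1 ` K1 \<subseteq> topspace X"
    using K(1) compactin_subset_topspace action_in_topspace[OF G act g(1)] by blast
  have "\<alpha> g1 ` K1 \<inter> \<alpha> g2 ` K2 = {}"
  proof (rule ccontr)
    assume "\<alpha> g1 ` K1 \<inter> \<alpha> g2 ` K2 \<noteq> {}"
    then obtain x where x1: "x \<in> \<alpha> g1 ` K1" and x2: "x \<in> \<alpha> g2 ` K2"
      by blast
    have xt: "x \<in> topspace X"
      using x1 top by blast
    have "1/2 < norm (cnj (d1 x) * c x * d2 x)"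
      using half_lt_mult_sqrt_mult[OF norm_ge_zero norm_ge_zero large1[OF x1] large2[OF x2]]
        f1(2)[OF xt] f2(2)[OF xt] by (simp add: a_b_c_def norm_mult)
    moreover have "bounded ((\<lambda>x. cnj (d1 x) * c x * d2 x) ` topspace X)"
      using d C0(3) by (intro bounded_mult_comp bounded_cnj_comp C0_imp_bounded)
    then have "norm (cnj (d1 x) * c x * d2 x) \<le> sup_norm X (\<lambda>x. cnj (d1 x) * c x * d2 x)"
      using xt by (rule norm_le_sup_norm)
    ultimately show False
      using close(3) by linarith
  qed
  moreover have "\<alpha> g1 ` K1 \<subseteq> U1"
  proof
    fix x assume x: "x \<in> \<alpha> g1 ` K1"
    then have "f1 x \<noteq> 0"
      using large1 by force
    then show "x \<in> U1"
      using f1(4) top x by blast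
  qed
  moreover have "\<alpha> g2 ` K2 \<subseteq> U2"
  proof
    fix x assume x: "x \<in> \<alpha> g2 ` K2"
    then have "f2 x \<noteq> 0"
      using large2 by force
    moreover have "x \<in> topspace X"
      using x K(2) compactin_subset_topspace action_in_topspace[OF G act g(2)] by blast
    ultimately show "x \<in> U2"
      using f2(4) by blast
  qed
  ultimately show "\<exists>g1\<in>carrier G. \<exists>g2\<in>carrier G. \<alpha> g1 ` K1 \<subseteq> U1 \<and> \<alpha> g2 ` K2 \<subseteq> U2 \<and>
      \<alpha> g1 ` K1 \<inter> \<alpha> g2 ` K2 = {}"
    using g by blast
qed

theorem mainTheorem8:
  fixes G :: "('g, 'b) monoid_scheme" and X :: "'a topology" and \<alpha> :: "'g \<Rightarrow> 'a \<Rightarrow> 'a"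
  assumes "group G"
    and "Hausdorff_space X"
    and "locally_compact_space X"
    and "homeo_action G X \<alpha>"
  shows "G_separating G X (induced_action G \<alpha>) \<longleftrightarrow>
    (\<forall>U1 U2 K1 K2. openin X U1 \<and> openin X U2 \<and> compactin X K1 \<and> compactin X K2 \<and>
        K1 \<subseteq> U1 \<and> K2 \<subseteq> U2 \<longrightarrow>
       (\<exists>g1\<in>carrier G. \<exists>g2\<in>carrier G. \<alpha> g1 ` K1 \<subseteq> U1 \<and> \<alpha> g2 ` K2 \<subseteq> U2 \<and>
          \<alpha> g1 ` K1 \<inter> \<alpha> g2 ` K2 = {}))"
  using G_separating_imp_separates_compacts[OF assms] separates_compacts_imp_G_separating[OF assms(1,4)]
  unfolding separates_compacts_def by blast

end
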